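(* Let $k,n\ge 1$ and let $x_1\le x_2\le\dots\le x_{kn}$ be real numbers. If $2\le k\le 16$, the partition of $\{1,\dots,kn\}$ into consecutive blocks $B_i=\{(i-1)k+1,\dots,ik\}$, $i=1,\dots,n$, is a minimal $k$-tuple partition with respect to $A$. If $2\le k\le 8$, the same partition is also minimal with respect to $S$.
   Context: For real numbers $x_1,\dots,x_k$ (repetitions allowed) define $A(x_1,\dots,x_k)=\sum_{1\le i<j\le k}|x_j-x_i|$ and $S(x_1,\dots,x_k)=\sum_{1\le i<j\le k}(x_j-x_i)^2$. Given real numbers $x_1,\dots,x_{kn}$, a $k$-tuple partition is a partition of the index set $\{1,\dots,kn\}$ into $n$ blocks, each of size $k$. Its cost with respect to $D\in\{A,S\}$ is the sum over blocks $\{i_1,\dots,i_k\}$ of $D(x_{i_1},\dots,x_{i_k})$. A $k$-tuple partition is minimal if its cost is less than or equal to the cost of every other $k$-tuple partition. *)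

theory Defs
  imports "HOL-Analysis.Analysis"
begin

definition pairs_in :: "nat set \<Rightarrow> (nat \<times> nat) set" where
  "pairs_in B = {(i, j). i \<in> B \<and> j \<in> B \<and> i < j}"

definition A_disp :: "(nat \<Rightarrow> real) \<Rightarrow> nat set \<Rightarrow> real" where
  "A_disp x B = (\<Sum>(i, j)\<in>pairs_in B. \<bar>x j - x i\<bar>)"

definition S_disp :: "(nat \<Rightarrow> real) \<Rightarrow> nat set \<Rightarrow> real" where
  "S_disp x B = (\<Sum>(i, j)\<in>pairs_in B. (x j - x i)^2)"

definition tuple_partition :: "nat \<Rightarrow> nat \<Rightarrow> nat set set \<Rightarrow> bool" where
  "tuple_partition k n P \<longleftrightarrow>
     \<Union>P = {1..k*n} \<and>
     (\<forall>B\<in>P. \<forall>C\<in>P. B \<noteq> C \<longrightarrow> B \<inter> C = {}) \<and>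
     (\<forall>B\<in>P. card B = k) \<and>
     card P = n"

definition partition_cost ::
  "((nat \<Rightarrow> real) \<Rightarrow> nat set \<Rightarrow> real) \<Rightarrow> (nat \<Rightarrow> real) \<Rightarrow> nat set set \<Rightarrow> real" where
  "partition_cost D x P = (\<Sum>B\<in>P. D x B)"

definition minimal_partition ::
  "((nat \<Rightarrow> real) \<Rightarrow> nat set \<Rightarrow> real) \<Rightarrow> nat \<Rightarrow> nat \<Rightarrow> (nat \<Rightarrow> real) \<Rightarrow> nat set set \<Rightarrow> bool" where
  "minimal_partition D k n x P \<longleftrightarrow>
     tuple_partition k n P \<and>
     (\<forall>Q. tuple_partition k n Q \<longrightarrow> partition_cost D x P \<le> partition_cost D x Q)"

definition consecutive_partition :: "nat \<Rightarrow> nat \<Rightarrow> nat set set" where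
  "consecutive_partition k n = (\<lambda>i. {(i - 1) * k + 1 .. i * k}) ` {1..n}"

end

theory Submission
  imports Defs
begin

text \<open>For \<open>A\<close>, write each \<open>|x\<^sub>j - x\<^sub>i|\<close> as a sum of gaps \<open>x\<^sub>m\<^sub>+\<^sub>1 - x\<^sub>m\<close>. The cost of
  a partition becomes \<open>\<Sum>\<^sub>m (x\<^sub>m\<^sub>+\<^sub>1 - x\<^sub>m) c\<^sub>m\<close>, where \<open>c\<^sub>m\<close> counts the pairs of a common
  block separated by the cut after \<open>m\<close>. If \<open>a\<^sub>B\<close> indices of block \<open>B\<close> lie below the cut, then
  \<open>c\<^sub>m = \<Sum>\<^sub>B a\<^sub>B (k - a\<^sub>B)\<close> with \<open>\<Sum>\<^sub>B a\<^sub>B = m\<close>, which is at least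
  \<open>(m mod k) (k - m mod k)\<close>; the consecutive partition attains this bound at every cut at once.

  For \<open>S\<close>, the cost of a block is \<open>k \<Sum> x\<^sub>i\<^sup>2 - (\<Sum> x\<^sub>i)\<^sup>2\<close>, so one has to maximise the sum
  of the squared block sums. Swapping an element of a block of maximal sum with a larger element of
  another block does not decrease it and keeps that block maximal; repeating this gathers the top
  \<open>k\<close> indices into one block, and induction on \<open>n\<close> finishes.

  Neither argument needs the bounds \<open>k \<le> 16\<close> and \<open>k \<le> 8\<close>.\<close>

lemma tuple_partitionD:
  assumes "tuple_partition k n Q"
  shows "\<Union>Q = {1..k*n}" and "finite Q" and "card Q = n"
    and "\<And>B. B \<in> Q \<Longrightarrow> card B = k" and "\<And>B. B \<in> Q \<Longrightarrow> finite B"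
    and "\<And>B C. B \<in> Q \<Longrightarrow> C \<in> Q \<Longrightarrow> B \<noteq> C \<Longrightarrow> B \<inter> C = {}"
proof -
  show U: "\<Union>Q = {1..k*n}" using assms by (simp add: tuple_partition_def)
  then show "finite Q" by (metis finite_UnionD finite_atLeastAtMost)
  show "\<And>B. B \<in> Q \<Longrightarrow> finite B" using U by (metis Union_upper finite_atLeastAtMost finite_subset)
qed (use assms in \<open>auto simp: tuple_partition_def\<close>)

lemma sum_Union_tuple_partition:
  assumes "tuple_partition k n Q"
  shows "(\<Sum>B\<in>Q. sum f B) = sum f {1..k*n}"
  using sum.Union_disjoint[of Q f] tuple_partitionD[OF assms] by (auto simp: pairwise_def disjnt_def)

lemma tuple_partition_Suc_iff:
  assumes "T \<in> Q" and T: "T = {k*m+1..k*m+k}"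
  shows "tuple_partition k (Suc m) Q \<longleftrightarrow> tuple_partition k m (Q - {T})"
proof
  assume Q: "tuple_partition k (Suc m) Q"
  note P = tuple_partitionD[OF Q]
  have "\<Union>(Q - {T}) = \<Union>Q - T"
    using P(6) \<open>T \<in> Q\<close> by blast
  also have "\<dots> = {1..k*m}" using P(1) T by auto
  finally show "tuple_partition k m (Q - {T})"
    using P \<open>T \<in> Q\<close> by (auto simp: tuple_partition_def)
next
  assume Q: "tuple_partition k m (Q - {T})"
  note P = tuple_partitionD[OF Q]
  have U: "\<Union>Q = T \<union> {1..k*m}" using P(1) \<open>T \<in> Q\<close> by blast
  then have "\<Union>Q = {1..k * Suc m}" using T by auto
  moreover have "B \<inter> C = {}" if "B \<in> Q" "C \<in> Q" "B \<noteq> C" for B C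
  proof -
    have "B \<inter> T = {}" if "B \<in> Q - {T}" for B
    proof -
      have "B \<subseteq> {1..k*m}" using that P(1) by blast
      then show ?thesis using T by auto
    qed
    then show ?thesis using P(6) that by (cases "B = T"; cases "C = T") auto
  qed
  moreover have "card Q = Suc m"
    using P(2,3) \<open>T \<in> Q\<close> by (metis card_Suc_Diff1 finite_Diff2 finite.emptyI finite_insert)
  moreover have "card B = k" if "B \<in> Q" for B
    using P(4)[of B] that T by (cases "B = T") auto
  ultimately show "tuple_partition k (Suc m) Q"
    by (auto simp: tuple_partition_def)
qed

lemma tuple_partition_permutes:
  assumes p: "p permutes {1..k*n}" and Q: "tuple_partition k n Q"
  shows "tuple_partition k n ((`) p ` Q)"
proof -
  note P = tuple_partitionD[OF Q]
  have "inj p" using p by (rule permutes_inj)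
  then have "inj_on ((`) p) Q" by (simp add: inj_on_def inj_image_eq_iff)
  moreover have "\<Union>((`) p ` Q) = {1..k*n}"
    using permutes_image[OF p] P(1) by (simp flip: image_Union)
  ultimately show ?thesis
    using P \<open>inj p\<close> by (auto simp: tuple_partition_def card_image inj_on_subset
        image_Int[symmetric] inj_image_eq_iff)
qed

lemma consecutive_partition_Suc:
  "consecutive_partition k (Suc n) = insert {k*n+1..k*n+k} (consecutive_partition k n)"
  by (simp add: consecutive_partition_def atLeastAtMostSuc_conv algebra_simps)

lemma finite_consecutive_partition: "finite (consecutive_partition k n)"
  by (simp add: consecutive_partition_def)

lemma Union_consecutive_partition: "\<Union>(consecutive_partition k n) = {1..k*n}"
proof (induction n)
  case (Suc n)
  then show ?case by (auto simp: consecutive_partition_Suc)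
qed (simp add: consecutive_partition_def)

lemma top_block_notin_consecutive_partition:
  assumes "k > 0"
  shows "{k*n+1..k*n+k} \<notin> consecutive_partition k n"
proof
  assume "{k*n+1..k*n+k} \<in> consecutive_partition k n"
  then have "k*n+1 \<in> \<Union>(consecutive_partition k n)"
    using assms by (intro UnionI[of "{k*n+1..k*n+k}"]) auto
  then show False by (simp add: Union_consecutive_partition)
qed

lemma tuple_partition_consecutive_partition:
  assumes "k > 0"
  shows "tuple_partition k n (consecutive_partition k n)"
proof (induction n)
  case 0
  then show ?case by (simp add: tuple_partition_def consecutive_partition_def)
next
  case (Suc n)
  then show ?case
    using tuple_partition_Suc_iff[of _ "consecutive_partition k (Suc n)"]
      top_block_notin_consecutive_partition[OF assms]
    by (simp add: consecutive_partition_Suc)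
qed

definition min_crossing :: "nat \<Rightarrow> nat \<Rightarrow> nat" where
  "min_crossing k m = m mod k * (k - m mod k)"

lemma mod_crossing_le:
  fixes r a k :: nat
  assumes "r < k" "a < k"
  shows "(r + a) mod k * (k - (r + a) mod k) \<le> r * (k - r) + a * (k - a)"
proof (cases "r + a < k")
  case True
  then obtain c where "k = r + a + c" by (metis less_imp_add_positive)
  then show ?thesis using True by (simp add: algebra_simps)
next
  case False
  then obtain c where c: "r + a = k + c" by (metis le_add_diff_inverse not_less)
  obtain r' a' where "k = r + r'" "k = a + a'" using assms by (metis less_imp_add_positive)
  then have "r = a' + c" "a = r' + c" and "k - c = r' + a'" "k - r = r'" "k - a = a'"
    using c by linarith+
  moreover have "(r + a) mod k = c" using c assms by (simp add: mod_if)
  ultimately have "(r + a) mod k * (k - (r + a) mod k) = c * (r' + a')"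
    and "r * (k - r) + a * (k - a) = (a' + c) * r' + (r' + c) * a'"
    by simp_all
  then show ?thesis by (simp add: algebra_simps)
qed

lemma min_crossing_add_le:
  assumes "a \<le> k"
  shows "min_crossing k (s + a) \<le> min_crossing k s + a * (k - a)"
proof (cases "a = k")
  case False
  then have "a < k" "s mod k < k" using assms by auto
  then show ?thesis
    using mod_crossing_le[of "s mod k" k a] by (simp add: min_crossing_def mod_add_left_eq)
qed (simp add: min_crossing_def)

lemma min_crossing_sum_le:
  assumes "finite Q" "\<And>B. B \<in> Q \<Longrightarrow> a B \<le> k"
  shows "min_crossing k (\<Sum>B\<in>Q. a B) \<le> (\<Sum>B\<in>Q. a B * (k - a B))"
  using assms
proof (induction Q rule: finite_induct)
  case (insert b Q)
  then have "min_crossing k (\<Sum>B\<in>insert b Q. a B) \<le> min_crossing k (\<Sum>B\<in>Q. a B) + a b * (k - a b)"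
    using min_crossing_add_le[of "a b" k "sum a Q"] by (simp add: add.commute)
  then show ?case using insert by simp
qed (simp add: min_crossing_def)

definition crossing_pairs :: "nat set set \<Rightarrow> nat \<Rightarrow> nat" where
  "crossing_pairs Q m = (\<Sum>B\<in>Q. card (B \<inter> {..m}) * card (B \<inter> {m<..}))"

lemma A_disp_eq_sum_gaps:
  assumes B: "B \<subseteq> {1..N}" and mono: "mono_on B x"
  shows "A_disp x B =
    (\<Sum>m\<in>{1..<N}. (x (Suc m) - x m) * real (card (B \<inter> {..m}) * card (B \<inter> {m<..})))"
proof -
  define g where "g m = x (Suc m) - x m" for m
  define between where "between p m \<longleftrightarrow> fst p \<le> m \<and> m < snd p" for p :: "nat \<times> nat" and m
  have "pairs_in B \<subseteq> B \<times> B" by (auto simp: pairs_in_def)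
  moreover have "finite (B \<times> B)" using B finite_subset by blast
  ultimately have fin: "finite (pairs_in B)" by (rule finite_subset)
  have "\<bar>x j - x i\<bar> = (\<Sum>m\<in>{1..<N}. if between (i, j) m then g m else 0)"
    if "(i, j) \<in> pairs_in B" for i j
  proof -
    have ij: "i \<in> B" "j \<in> B" "i < j" using that by (auto simp: pairs_in_def)
    then have "\<bar>x j - x i\<bar> = (\<Sum>m\<in>{i..<j}. g m)"
      using mono_onD[OF mono] by (simp add: g_def sum_Suc_diff')
    also have "{i..<j} = {m \<in> {1..<N}. between (i, j) m}"
      using ij B by (auto simp: between_def)
    finally show ?thesis by (simp add: sum.inter_filter[symmetric])
  qed
  then have "A_disp x B = (\<Sum>p\<in>pairs_in B. \<Sum>m\<in>{1..<N}. if between p m then g m else 0)"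
    unfolding A_disp_def by (intro sum.cong) auto
  also have "\<dots> = (\<Sum>m\<in>{1..<N}. \<Sum>p\<in>pairs_in B. if between p m then g m else 0)"
    by (rule sum.swap)
  also have "\<dots> = (\<Sum>m\<in>{1..<N}. g m * real (card (B \<inter> {..m}) * card (B \<inter> {m<..})))"
  proof (intro sum.cong refl)
    fix m
    have "{p \<in> pairs_in B. between p m} = (B \<inter> {..m}) \<times> (B \<inter> {m<..})"
      by (auto simp: pairs_in_def between_def)
    then show "(\<Sum>p\<in>pairs_in B. if between p m then g m else 0)
        = g m * real (card (B \<inter> {..m}) * card (B \<inter> {m<..}))"
      by (simp add: sum.inter_filter[OF fin, symmetric] card_cartesian_product)
  qed
  finally show ?thesis by (simp add: g_def)
qed

lemma crossing_interval:
  fixes a k m :: nat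
  shows "card ({a+1..a+k} \<inter> {..m}) * card ({a+1..a+k} \<inter> {m<..})
    = (if a \<le> m \<and> m < a + k then (m - a) * (a + k - m) else 0)"
proof -
  have "{Suc a..a+k} \<inter> {..m} = {Suc a..min m (a+k)}"
    and "{Suc a..a+k} \<inter> {m<..} = {max (Suc a) (Suc m)..a+k}"
    by auto
  then show ?thesis by (auto simp: min_def max_def)
qed

lemma crossing_pairs_insert:
  "finite Q \<Longrightarrow> T \<notin> Q \<Longrightarrow>
    crossing_pairs (insert T Q) m = card (T \<inter> {..m}) * card (T \<inter> {m<..}) + crossing_pairs Q m"
  by (simp add: crossing_pairs_def)

lemma crossing_pairs_consecutive_partition:
  assumes "k > 0"
  shows "crossing_pairs (consecutive_partition k n) m = (if m < k*n then min_crossing k m else 0)"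
proof (induction n)
  case 0
  then show ?case by (simp add: crossing_pairs_def consecutive_partition_def)
next
  case (Suc n)
  have mod: "m mod k = m - k*n" if "k*n \<le> m" "m < k*n + k"
  proof -
    have "m mod k = (m - k*n + n*k) mod k" using that(1) by (simp add: mult.commute)
    also have "\<dots> = m - k*n" using that by (simp only: mod_mult_self1) simp
    finally show ?thesis .
  qed
  have "crossing_pairs (consecutive_partition k (Suc n)) m =
      card ({k*n+1..k*n+k} \<inter> {..m}) * card ({k*n+1..k*n+k} \<inter> {m<..})
      + crossing_pairs (consecutive_partition k n) m"
    unfolding consecutive_partition_Suc
    using finite_consecutive_partition top_block_notin_consecutive_partition[OF assms]
    by (rule crossing_pairs_insert)
  also have "\<dots> = (if k*n \<le> m \<and> m < k*n + k then (m - k*n) * (k*n + k - m) else 0)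
      + (if m < k*n then min_crossing k m else 0)"
    by (simp only: crossing_interval Suc.IH)
  finally show ?case
    using mod by (cases "m < k*n"; cases "m < k*n + k") (simp_all add: min_crossing_def add.commute)
qed

lemma partition_cost_A_disp:
  assumes Q: "tuple_partition k n Q" and mono: "mono_on {1..k*n} x"
  shows "partition_cost A_disp x Q = (\<Sum>m\<in>{1..<k*n}. (x (Suc m) - x m) * real (crossing_pairs Q m))"
proof -
  note P = tuple_partitionD[OF Q]
  have "partition_cost A_disp x Q = (\<Sum>B\<in>Q. \<Sum>m\<in>{1..<k*n}.
      (x (Suc m) - x m) * real (card (B \<inter> {..m}) * card (B \<inter> {m<..})))"
    unfolding partition_cost_def
  proof (intro sum.cong refl A_disp_eq_sum_gaps)
    fix B assume "B \<in> Q"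
    then show "B \<subseteq> {1..k*n}" using P(1) by blast
    then show "mono_on B x" by (rule mono_on_subset[OF mono])
  qed
  also have "\<dots> = (\<Sum>m\<in>{1..<k*n}. (x (Suc m) - x m) * real (crossing_pairs Q m))"
    by (subst sum.swap) (simp add: crossing_pairs_def sum_distrib_left)
  finally show ?thesis .
qed

lemma min_crossing_le_crossing_pairs:
  assumes Q: "tuple_partition k n Q" and "m \<le> k*n"
  shows "min_crossing k m \<le> crossing_pairs Q m"
proof -
  note P = tuple_partitionD[OF Q]
  have "(\<Sum>B\<in>Q. card (B \<inter> {..m})) = card (\<Union>B\<in>Q. B \<inter> {..m})"
    using P(2,5) by (intro card_UN_disjoint[symmetric]) (use P(6) in blast)+
  also have "(\<Union>B\<in>Q. B \<inter> {..m}) = {1..m}"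
    using P(1) assms(2) by auto
  finally have "(\<Sum>B\<in>Q. card (B \<inter> {..m})) = m" by simp
  moreover have "card (B \<inter> {..m}) \<le> k" if "B \<in> Q" for B
    using P(4,5) that by (metis card_mono inf_le1)
  ultimately have "min_crossing k m \<le> (\<Sum>B\<in>Q. card (B \<inter> {..m}) * (k - card (B \<inter> {..m})))"
    using min_crossing_sum_le[of Q "\<lambda>B. card (B \<inter> {..m})" k] P(2) by simp
  also have "\<dots> = crossing_pairs Q m"
    unfolding crossing_pairs_def
  proof (intro sum.cong refl)
    fix B assume "B \<in> Q"
    have "card ((B \<inter> {..m}) \<union> (B \<inter> {m<..})) = card (B \<inter> {..m}) + card (B \<inter> {m<..})"
      using P(5)[OF \<open>B \<in> Q\<close>] by (intro card_Un_disjoint) auto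
    moreover have "(B \<inter> {..m}) \<union> (B \<inter> {m<..}) = B" by auto
    ultimately have "card B = card (B \<inter> {..m}) + card (B \<inter> {m<..})" by simp
    then show "card (B \<inter> {..m}) * (k - card (B \<inter> {..m})) = card (B \<inter> {..m}) * card (B \<inter> {m<..})"
      using P(4)[OF \<open>B \<in> Q\<close>] by simp
  qed
  finally show ?thesis .
qed

lemma minimal_partition_A_disp:
  assumes "k > 0" and mono: "mono_on {1..k*n} x"
  shows "minimal_partition A_disp k n x (consecutive_partition k n)"
  unfolding minimal_partition_def
proof (intro conjI allI impI)
  show C: "tuple_partition k n (consecutive_partition k n)"
    using \<open>k > 0\<close> by (rule tuple_partition_consecutive_partition)
  fix Q assume Q: "tuple_partition k n Q"
  have "crossing_pairs (consecutive_partition k n) m \<le> crossing_pairs Q m" if "m \<le> k*n" for m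
    using min_crossing_le_crossing_pairs[OF Q that]
    by (simp add: crossing_pairs_consecutive_partition[OF \<open>k > 0\<close>])
  moreover have "x m \<le> x (Suc m)" if "m \<in> {1..<k*n}" for m
    using that by (intro mono_onD[OF mono]) auto
  ultimately show "partition_cost A_disp x (consecutive_partition k n) \<le> partition_cost A_disp x Q"
    unfolding partition_cost_A_disp[OF C mono] partition_cost_A_disp[OF Q mono]
    by (intro sum_mono mult_left_mono) auto
qed

lemma S_disp_eq:
  assumes "finite B"
  shows "S_disp x B = real (card B) * (\<Sum>i\<in>B. (x i)\<^sup>2) - (sum x B)\<^sup>2"
proof -
  define f where "f i j = (x j - x i)\<^sup>2" for i j
  define upper where "upper = (\<Sum>i\<in>B. \<Sum>j\<in>B. if i < j then f i j else 0)"
  have "S_disp x B = (\<Sum>p\<in>B \<times> B. if fst p < snd p then f (fst p) (snd p) else 0)"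
  proof -
    have "pairs_in B = {p \<in> B \<times> B. fst p < snd p}" by (auto simp: pairs_in_def)
    then show ?thesis
      unfolding S_disp_def f_def using assms by (simp add: sum.inter_filter case_prod_unfold)
  qed
  then have S: "S_disp x B = upper"
    by (simp add: upper_def sum.cartesian_product case_prod_unfold)
  have lower: "(\<Sum>i\<in>B. \<Sum>j\<in>B. if j < i then f i j else 0) = upper"
    unfolding upper_def f_def by (subst sum.swap) (intro sum.cong refl; metis power2_commute)
  have "(\<Sum>i\<in>B. \<Sum>j\<in>B. f i j) = upper + (\<Sum>i\<in>B. \<Sum>j\<in>B. if j < i then f i j else 0)"
    unfolding upper_def sum.distrib[symmetric] by (intro sum.cong refl) (auto simp: f_def)
  also have "(\<Sum>i\<in>B. \<Sum>j\<in>B. f i j) = 2 * (real (card B) * (\<Sum>i\<in>B. (x i)\<^sup>2) - (sum x B)\<^sup>2)"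
    by (simp add: f_def power2_diff sum.distrib sum_subtractf sum_distrib_left sum_distrib_right
        power2_eq_square algebra_simps)
  finally show ?thesis using S lower by simp
qed

definition block_square_sum :: "(nat \<Rightarrow> real) \<Rightarrow> nat set set \<Rightarrow> real" where
  "block_square_sum x Q = (\<Sum>B\<in>Q. (sum x B)\<^sup>2)"

lemma partition_cost_S_disp:
  assumes Q: "tuple_partition k n Q"
  shows "partition_cost S_disp x Q = real k * (\<Sum>i\<in>{1..k*n}. (x i)\<^sup>2) - block_square_sum x Q"
proof -
  note P = tuple_partitionD[OF Q]
  have "partition_cost S_disp x Q = (\<Sum>B\<in>Q. real k * (\<Sum>i\<in>B. (x i)\<^sup>2) - (sum x B)\<^sup>2)"
    unfolding partition_cost_def using P(4,5) by (intro sum.cong) (simp_all add: S_disp_eq)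
  also have "\<dots> = real k * (\<Sum>B\<in>Q. \<Sum>i\<in>B. (x i)\<^sup>2) - block_square_sum x Q"
    by (simp add: block_square_sum_def sum_subtractf sum_distrib_left)
  finally show ?thesis by (simp only: sum_Union_tuple_partition[OF Q])
qed

lemma transpose_image_insert:
  assumes "i \<in> B" "j \<notin> B"
  shows "Transposition.transpose i j ` B = insert j (B - {i})"
  using assms by (auto simp: in_transpose_image_iff Transposition.transpose_def)

lemma sum_transpose_image:
  fixes x :: "'b \<Rightarrow> 'a::ab_group_add"
  assumes "finite B" "i \<in> B" "j \<notin> B"
  shows "sum x (Transposition.transpose i j ` B) = sum x B - x i + x j"
  using assms by (simp add: transpose_image_insert sum.remove)

lemma sum_squares_spread_le:
  fixes a c d :: real
  assumes "c \<le> a" "0 \<le> d"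
  shows "a\<^sup>2 + c\<^sup>2 \<le> (a + d)\<^sup>2 + (c - d)\<^sup>2"
proof -
  have "0 \<le> d * (a - c + d)" using assms by simp
  then show ?thesis by (simp add: power2_eq_square algebra_simps)
qed

lemma transpose_between_blocks:
  fixes x :: "nat \<Rightarrow> real"
  assumes Q: "tuple_partition k n Q" and "b \<in> Q" "C \<in> Q" "C \<noteq> b" "i \<in> b" "j \<in> C"
    and "x i \<le> x j" and b_max: "\<And>B. B \<in> Q \<Longrightarrow> sum x B \<le> sum x b"
  defines "\<tau> \<equiv> Transposition.transpose i j"
  shows "block_square_sum x Q \<le> block_square_sum x ((`) \<tau> ` Q)"
    and "\<And>D. D \<in> (`) \<tau> ` Q \<Longrightarrow> sum x D \<le> sum x (\<tau> ` b)"
proof -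
  note P = tuple_partitionD[OF Q]
  define \<delta> where "\<delta> = x j - x i"
  have "i \<notin> C" "j \<notin> b" using P(6)[OF \<open>C \<in> Q\<close> \<open>b \<in> Q\<close> \<open>C \<noteq> b\<close>] \<open>i \<in> b\<close> \<open>j \<in> C\<close> by auto
  have sum_b: "sum x (\<tau> ` b) = sum x b + \<delta>"
    using sum_transpose_image[where x = x, OF P(5)[OF \<open>b \<in> Q\<close>] \<open>i \<in> b\<close> \<open>j \<notin> b\<close>]
    unfolding \<tau>_def \<delta>_def by simp
  have sum_C: "sum x (\<tau> ` C) = sum x C - \<delta>"
    using sum_transpose_image[where x = x, OF P(5)[OF \<open>C \<in> Q\<close>] \<open>j \<in> C\<close> \<open>i \<notin> C\<close>]
    unfolding \<tau>_def \<delta>_def transpose_commute[of j i] by simp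
  have sum_other: "sum x (\<tau> ` B) = sum x B" if "B \<in> Q" "B \<noteq> b" "B \<noteq> C" for B
  proof -
    have "i \<notin> B" "j \<notin> B"
      using P(6) that \<open>b \<in> Q\<close> \<open>C \<in> Q\<close> \<open>i \<in> b\<close> \<open>j \<in> C\<close> by blast+
    then show ?thesis by (simp add: \<tau>_def)
  qed
  have "inj_on ((`) \<tau>) Q"
    unfolding \<tau>_def by (rule inj_on_image) simp
  then have image_sum: "(\<Sum>D\<in>(`) \<tau> ` Q. f D) = (\<Sum>B\<in>Q. f (\<tau> ` B))" for f :: "nat set \<Rightarrow> real"
    by (simp add: sum.reindex comp_def)
  have split: "(\<Sum>B\<in>Q. f B) = f b + f C + (\<Sum>B\<in>Q - {b} - {C}. f B)" for f :: "nat set \<Rightarrow> real"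
    using P(2) assms(2,3,4) by (simp add: sum.remove[of Q b] sum.remove[of "Q - {b}" C])
  have "0 \<le> \<delta>" using assms(7) by (simp add: \<delta>_def)
  then have "(sum x b)\<^sup>2 + (sum x C)\<^sup>2 \<le> (sum x b + \<delta>)\<^sup>2 + (sum x C - \<delta>)\<^sup>2"
    using b_max[OF \<open>C \<in> Q\<close>] by (intro sum_squares_spread_le)
  moreover have "(\<Sum>B\<in>Q - {b} - {C}. (sum x (\<tau> ` B))\<^sup>2) = (\<Sum>B\<in>Q - {b} - {C}. (sum x B)\<^sup>2)"
    using sum_other by (intro sum.cong) auto
  ultimately show "block_square_sum x Q \<le> block_square_sum x ((`) \<tau> ` Q)"
    unfolding block_square_sum_def image_sum
      split[of "\<lambda>B. (sum x (\<tau> ` B))\<^sup>2"] split[of "\<lambda>B. (sum x B)\<^sup>2"]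
    using sum_b sum_C by simp
  fix D assume "D \<in> (`) \<tau> ` Q"
  then obtain B where "B \<in> Q" "D = \<tau> ` B" by blast
  then show "sum x D \<le> sum x (\<tau> ` b)"
    using sum_b sum_C sum_other[OF \<open>B \<in> Q\<close>] b_max[OF \<open>B \<in> Q\<close>] b_max[OF \<open>C \<in> Q\<close>] \<open>0 \<le> \<delta>\<close>
    by (cases "B = b"; cases "B = C") auto
qed

lemma exists_partition_containing_block:
  fixes x :: "nat \<Rightarrow> real"
  assumes Q: "tuple_partition k n Q" and "b \<in> Q" and b_max: "\<And>B. B \<in> Q \<Longrightarrow> sum x B \<le> sum x b"
    and T: "T \<subseteq> {1..k*n}" "card T = k"
    and top: "\<And>i j. i \<in> {1..k*n} - T \<Longrightarrow> j \<in> T \<Longrightarrow> x i \<le> x j"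
  shows "\<exists>Q'. tuple_partition k n Q' \<and> T \<in> Q' \<and> block_square_sum x Q \<le> block_square_sum x Q'"
  using Q \<open>b \<in> Q\<close> b_max
proof (induction "card (b - T)" arbitrary: Q b)
  case 0
  note P = tuple_partitionD[OF "0.prems"(1)]
  have "finite b" "card b = k" using P(4,5) \<open>b \<in> Q\<close> by auto
  then have "b \<subseteq> T" using "0.hyps" by auto
  then have "b = T" using T \<open>card b = k\<close> by (simp add: card_subset_eq finite_subset)
  then show ?case using "0.prems" by blast
next
  case (Suc d)
  note P = tuple_partitionD[OF Suc.prems(1)]
  have "finite b" "card b = k" "b \<subseteq> {1..k*n}" using P(1,4,5) \<open>b \<in> Q\<close> by auto
  have "b - T \<noteq> {}" using Suc.hyps(2) card_gt_0_iff[of "b - T"] by simp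
  then obtain i where i: "i \<in> b" "i \<notin> T" by blast
  have "card (T - b) = card (b - T)"
    using T \<open>finite b\<close> \<open>card b = k\<close> by (simp add: card_Diff_subset_Int finite_subset Int_commute)
  then have "T - b \<noteq> {}" using Suc.hyps(2) card_gt_0_iff[of "T - b"] by simp
  then obtain j where j: "j \<in> T" "j \<notin> b" by blast
  then obtain C where "C \<in> Q" "j \<in> C" "C \<noteq> b" using P(1) T by blast
  define \<tau> where "\<tau> = Transposition.transpose i j"
  have "x i \<le> x j" using top i j \<open>b \<subseteq> {1..k*n}\<close> by blast
  note exchange = transpose_between_blocks[OF Suc.prems(1) \<open>b \<in> Q\<close> \<open>C \<in> Q\<close> \<open>C \<noteq> b\<close> i(1) \<open>j \<in> C\<close>
      this Suc.prems(3), folded \<tau>_def]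
  have "\<tau> permutes {1..k*n}"
    unfolding \<tau>_def using i j T \<open>b \<subseteq> {1..k*n}\<close> by (intro permutes_swap_id) auto
  then have Q1: "tuple_partition k n ((`) \<tau> ` Q)"
    using Suc.prems(1) by (rule tuple_partition_permutes)
  have "\<tau> ` b - T = (b - T) - {i}"
    using transpose_image_insert[OF i(1) j(2)] j(1) i(2) unfolding \<tau>_def by auto
  then have "d = card (\<tau> ` b - T)" using Suc.hyps(2) i by simp
  then obtain Q' where "tuple_partition k n Q'" "T \<in> Q'"
    and "block_square_sum x ((`) \<tau> ` Q) \<le> block_square_sum x Q'"
    using Suc.hyps(1)[OF _ Q1 _ exchange(2)] \<open>b \<in> Q\<close> by blast
  then show ?case using exchange(1) by (meson order.trans)
qed

lemma block_square_sum_le_consecutive_partition: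
  fixes x :: "nat \<Rightarrow> real"
  assumes "k > 0" and "mono_on {1..k*n} x" and "tuple_partition k n Q"
  shows "block_square_sum x Q \<le> block_square_sum x (consecutive_partition k n)"
  using assms(2,3)
proof (induction n arbitrary: Q)
  case 0
  then have "Q = {}" using tuple_partitionD(2,3)[OF "0.prems"(2)] by simp
  then show ?case by (simp add: block_square_sum_def consecutive_partition_def)
next
  case (Suc n)
  define T where "T = {k*n+1..k*n+k}"
  note P = tuple_partitionD[OF Suc.prems(2)]
  have "Q \<noteq> {}" using P(3) by auto
  have "Max (sum x ` Q) \<in> sum x ` Q" using P(2) \<open>Q \<noteq> {}\<close> by simp
  then obtain b where "b \<in> Q" and b: "sum x b = Max (sum x ` Q)" by (metis imageE)
  have b_max: "sum x B \<le> sum x b" if "B \<in> Q" for B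
    using Max_ge[of "sum x ` Q" "sum x B"] P(2) that by (simp add: b)
  have "T \<subseteq> {1..k * Suc n}" "card T = k" by (auto simp: T_def)
  moreover have "x i \<le> x j" if "i \<in> {1..k * Suc n} - T" "j \<in> T" for i j
    using that mono_onD[OF Suc.prems(1)] by (auto simp: T_def)
  ultimately obtain Q' where Q': "tuple_partition k (Suc n) Q'" "T \<in> Q'"
    and le: "block_square_sum x Q \<le> block_square_sum x Q'"
    using exists_partition_containing_block[OF Suc.prems(2) \<open>b \<in> Q\<close> b_max] by blast
  have "tuple_partition k n (Q' - {T})"
    using tuple_partition_Suc_iff[OF Q'(2) T_def] Q'(1) by simp
  moreover have "mono_on {1..k*n} x"
    using Suc.prems(1) by (rule mono_on_subset) auto
  ultimately have IH: "block_square_sum x (Q' - {T}) \<le> block_square_sum x (consecutive_partition k n)"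
    using Suc.IH by blast
  have "block_square_sum x Q' = (sum x T)\<^sup>2 + block_square_sum x (Q' - {T})"
    using tuple_partitionD(2)[OF Q'(1)] Q'(2) by (simp add: block_square_sum_def sum.remove)
  moreover have "block_square_sum x (consecutive_partition k (Suc n))
      = (sum x T)\<^sup>2 + block_square_sum x (consecutive_partition k n)"
    using top_block_notin_consecutive_partition[OF \<open>k > 0\<close>] finite_consecutive_partition
    by (simp add: block_square_sum_def consecutive_partition_Suc T_def)
  ultimately show ?case using le IH by simp
qed

lemma minimal_partition_S_disp:
  assumes "k > 0" and mono: "mono_on {1..k*n} x"
  shows "minimal_partition S_disp k n x (consecutive_partition k n)"
  unfolding minimal_partition_def
proof (intro conjI allI impI)
  show C: "tuple_partition k n (consecutive_partition k n)"
    using \<open>k > 0\<close> by (rule tuple_partition_consecutive_partition)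
  fix Q assume Q: "tuple_partition k n Q"
  show "partition_cost S_disp x (consecutive_partition k n) \<le> partition_cost S_disp x Q"
    unfolding partition_cost_S_disp[OF C] partition_cost_S_disp[OF Q]
    using block_square_sum_le_consecutive_partition[OF assms Q] by simp
qed

theorem mainTheorem5:
  fixes k n :: nat and x :: "nat \<Rightarrow> real"
  assumes "k \<ge> 1" and "n \<ge> 1"
    and sorted: "\<And>i j. 1 \<le> i \<Longrightarrow> i \<le> j \<Longrightarrow> j \<le> k * n \<Longrightarrow> x i \<le> x j"
  shows "(2 \<le> k \<and> k \<le> 16 \<longrightarrow> minimal_partition A_disp k n x (consecutive_partition k n))
       \<and> (2 \<le> k \<and> k \<le> 8 \<longrightarrow> minimal_partition S_disp k n x (consecutive_partition k n))"
proof -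
  have "k > 0" using \<open>k \<ge> 1\<close> by simp
  moreover have "mono_on {1..k*n} x" using sorted by (auto intro: mono_onI)
  ultimately show ?thesis
    using minimal_partition_A_disp minimal_partition_S_disp by blast
qed

end
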